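(* Let $G=(V,E)$ be a finite graph with boundary $B\subseteq V$, $|B|\ge2$, and let $\delta_B=\min_{x\in B}\deg(x)$ be the minimum degree (in $G$) of the boundary vertices. Then $$\sigma_2(G,B)\le\frac{|B|}{|B|-1}\,\delta_B.$$
   Context: $G=(V,E)$ is a finite undirected graph. A boundary is a subset $B\subseteq V$ with $|B|\ge2$. For $f:V\to\mathbb{R}$, $f\neq0$, the Rayleigh quotient is $R(f)=\frac{\sum_{\{x,y\}\in E}(f(x)-f(y))^2}{\sum_{x\in B}f(x)^2}$, interpreted as $+\infty$ if $f$ vanishes on $B$. For $1\le k\le|B|$, the $k$-th Steklov eigenvalue is $\sigma_k(G,B)=\min_{W\subseteq\mathbb{R}^V,\dim W=k}\max_{0\ne f\in W}R(f)$, so $0=\sigma_1\le\sigma_2\le\cdots$. *)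

theory Defs
  imports "HOL-Analysis.Analysis"
begin

text \<open>A finite undirected (simple) graph with vertex set the finite type 'v;
  edges are two-element subsets of the vertex set.  Functions on vertices are
  vectors in real^'v.\<close>

definition is_graph :: "'v::finite set set \<Rightarrow> bool" where
  "is_graph E \<longleftrightarrow> (\<forall>e\<in>E. card e = 2)"

definition degree :: "'v::finite set set \<Rightarrow> 'v \<Rightarrow> nat" where
  "degree E x = card {e\<in>E. x \<in> e}"

definition rayleigh :: "'v::finite set set \<Rightarrow> 'v set \<Rightarrow> real^'v \<Rightarrow> ereal" where
  "rayleigh E B f =
    (if (\<Sum>x\<in>B. (f$x)^2) = 0 then \<infinity>
     else ereal ((\<Sum>e\<in>E. (\<Sum>x\<in>e. \<Sum>y\<in>e. (f$x - f$y)^2) / 2) / (\<Sum>x\<in>B. (f$x)^2)))"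

definition steklov :: "'v::finite set set \<Rightarrow> 'v set \<Rightarrow> nat \<Rightarrow> ereal" where
  "steklov E B k =
    (INF W \<in> {W :: (real^'v) set. subspace W \<and> dim W = k}.
       (SUP f \<in> W - {0}. rayleigh E B f))"

end

theory Submission
  imports Defs
begin

text \<open>Test with the plane spanned by the constant function 1 and the indicator of a
  boundary vertex x0 of minimum degree. For f = a + b [x = x0] the only edges that see a
  jump are those at x0, so the energy is b^2 deg x0, while the boundary mass is
  (a + b)^2 + (n - 1) a^2 with n = |B|. The identity
  n ((a + b)^2 + (n - 1) a^2) - (n - 1) b^2 = (n a + b)^2
  bounds every Rayleigh quotient on this plane by n/(n - 1) deg x0.\<close>

lemma steklov_le_SUP_rayleigh:
  assumes "subspace W" and "dim W = k"
  shows "steklov E B k \<le> (SUP f \<in> W - {0}. rayleigh E B f)"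
  unfolding steklov_def using assms by (intro INF_lower) simp

lemma rayleigh_le_ereal:
  assumes "(\<Sum>x\<in>B. (f$x)^2) \<noteq> 0"
    and "(\<Sum>e\<in>E. (\<Sum>x\<in>e. \<Sum>y\<in>e. (f$x - f$y)^2) / 2) \<le> c * (\<Sum>x\<in>B. (f$x)^2)"
  shows "rayleigh E B f \<le> ereal c"
proof -
  have "(\<Sum>x\<in>B. (f$x)^2) \<ge> 0"
    by (simp add: sum_nonneg)
  with assms(1) have "(\<Sum>x\<in>B. (f$x)^2) > 0"
    by linarith
  with assms show ?thesis
    by (simp add: rayleigh_def pos_divide_le_eq)
qed

lemma edge_energy_doubleton:
  fixes f :: "'a \<Rightarrow> real"
  assumes "u \<noteq> v"
  shows "(\<Sum>x\<in>{u, v}. \<Sum>y\<in>{u, v}. (f x - f y)^2) / 2 = (f u - f v)^2"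
  using assms by (simp add: power2_commute)

lemma dirichlet_energy_const_plus_axis:
  fixes E :: "'v::finite set set" and a b :: real and x\<^sub>0 :: 'v
  assumes "is_graph E"
  defines "f \<equiv> a *\<^sub>R 1 + b *\<^sub>R axis x\<^sub>0 1 :: real^'v"
  shows "(\<Sum>e\<in>E. (\<Sum>x\<in>e. \<Sum>y\<in>e. (f$x - f$y)^2) / 2) = b^2 * real (degree E x\<^sub>0)"
proof -
  have edge: "(\<Sum>x\<in>e. \<Sum>y\<in>e. (f$x - f$y)^2) / 2 = (if x\<^sub>0 \<in> e then b^2 else 0)"
    if "e \<in> E" for e
  proof -
    obtain u v where e: "e = {u, v}" and "u \<noteq> v"
      using \<open>e \<in> E\<close> assms(1) by (auto simp: is_graph_def card_2_iff)
    then show ?thesis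
      by (auto simp: edge_energy_doubleton f_def axis_def)
  qed
  have "(\<Sum>e\<in>E. (\<Sum>x\<in>e. \<Sum>y\<in>e. (f$x - f$y)^2) / 2) = (\<Sum>e\<in>E. if x\<^sub>0 \<in> e then b^2 else 0)"
    using edge by (rule sum.cong[OF refl])
  also have "\<dots> = b^2 * real (degree E x\<^sub>0)"
    by (simp add: sum.inter_filter[symmetric] degree_def)
  finally show ?thesis .
qed

lemma boundary_mass_const_plus_axis:
  fixes a b :: real
  assumes "x\<^sub>0 \<in> B"
  defines "f \<equiv> a *\<^sub>R 1 + b *\<^sub>R axis x\<^sub>0 1 :: real^'v::finite"
  shows "(\<Sum>x\<in>B. (f$x)^2) = (a + b)^2 + (real (card B) - 1) * a^2"
proof -
  have "(\<Sum>x\<in>B. (f$x)^2) = (f$x\<^sub>0)^2 + (\<Sum>x\<in>B - {x\<^sub>0}. (f$x)^2)"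
    using assms(1) by (simp add: sum.remove)
  also have "(\<Sum>x\<in>B - {x\<^sub>0}. (f$x)^2) = (\<Sum>x\<in>B - {x\<^sub>0}. a^2)"
    by (rule sum.cong) (auto simp: f_def axis_def)
  also have "\<dots> = (real (card B) - 1) * a^2"
  proof -
    have "card B \<ge> 1"
      using assms(1) by (auto simp: Suc_le_eq card_gt_0_iff)
    then show ?thesis
      using assms(1) by (simp add: card_Diff_singleton of_nat_diff)
  qed
  finally show ?thesis
    by (simp add: f_def)
qed

lemma two_point_quotient_bound:
  fixes a b n d :: real
  assumes "n > 1" and "d \<ge> 0"
  shows "b^2 * d \<le> n / (n - 1) * d * ((a + b)^2 + (n - 1) * a^2)"
proof -
  have "n * ((a + b)^2 + (n - 1) * a^2) - (n - 1) * b^2 = (n * a + b)^2"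
    by (simp add: power2_eq_square algebra_simps)
  then have "(n - 1) * b^2 \<le> n * ((a + b)^2 + (n - 1) * a^2)"
    by (metis diff_ge_0_iff_ge zero_le_power2)
  from mult_right_mono[OF this assms(2)]
  have "(n - 1) * b^2 * d / (n - 1) \<le> n * ((a + b)^2 + (n - 1) * a^2) * d / (n - 1)"
    using assms(1) by (intro divide_right_mono) simp_all
  then show ?thesis
    using assms(1) by (simp add: mult_ac)
qed

lemma rayleigh_const_plus_axis_le:
  fixes E :: "'v::finite set set" and f :: "real^'v"
  assumes "is_graph E" and "x\<^sub>0 \<in> B" and "card B \<ge> 2"
    and f: "f = a *\<^sub>R 1 + b *\<^sub>R axis x\<^sub>0 1" and "f \<noteq> 0"
  shows "rayleigh E B f \<le> ereal (real (card B) / (real (card B) - 1) * real (degree E x\<^sub>0))"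
proof (rule rayleigh_le_ereal)
  let ?n = "real (card B)"
  have energy: "(\<Sum>e\<in>E. (\<Sum>x\<in>e. \<Sum>y\<in>e. (f$x - f$y)^2) / 2) = b^2 * real (degree E x\<^sub>0)"
    unfolding f by (rule dirichlet_energy_const_plus_axis[OF assms(1)])
  have mass: "(\<Sum>x\<in>B. (f$x)^2) = (a + b)^2 + (?n - 1) * a^2"
    unfolding f by (rule boundary_mass_const_plus_axis[OF assms(2)])
  have "a \<noteq> 0 \<or> a + b \<noteq> 0"
    using assms(5) f by auto
  moreover have "?n - 1 > 0"
    using assms(3) by simp
  ultimately have "(a + b)^2 + (?n - 1) * a^2 > 0"
    by (metis add_nonneg_pos add_pos_nonneg mult_pos_pos mult_nonneg_nonneg less_imp_le
        zero_less_power2 zero_le_power2)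
  then show "(\<Sum>x\<in>B. (f$x)^2) \<noteq> 0"
    using mass by simp
  show "(\<Sum>e\<in>E. (\<Sum>x\<in>e. \<Sum>y\<in>e. (f$x - f$y)^2) / 2)
    \<le> ?n / (?n - 1) * real (degree E x\<^sub>0) * (\<Sum>x\<in>B. (f$x)^2)"
    unfolding energy mass using assms(3) by (intro two_point_quotient_bound) auto
qed

lemma dim_span_one_axis:
  assumes "y \<noteq> x\<^sub>0"
  shows "dim (span {1, axis x\<^sub>0 1 :: real^'v::finite}) = 2"
proof -
  have "(1 :: real^'v) \<notin> span {axis x\<^sub>0 1}"
  proof
    assume "(1 :: real^'v) \<in> span {axis x\<^sub>0 1}"
    then obtain k where "(1 :: real^'v) = k *\<^sub>R axis x\<^sub>0 1"
      by (auto simp: span_singleton)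
    then have "(1 :: real^'v) $ y = (k *\<^sub>R axis x\<^sub>0 1) $ y"
      by simp
    then show False
      using assms by (simp add: axis_def)
  qed
  moreover have "axis x\<^sub>0 1 \<noteq> (0 :: real^'v)"
    by (simp add: axis_eq_0_iff)
  ultimately have "independent {1, axis x\<^sub>0 1 :: real^'v}"
    by (simp add: independent_insert)
  moreover have "(1 :: real^'v) \<noteq> axis x\<^sub>0 1"
    using \<open>(1 :: real^'v) \<notin> span {axis x\<^sub>0 1}\<close> span_base by blast
  ultimately show ?thesis
    by (simp add: dim_eq_card_independent)
qed

theorem mainTheorem3:
  fixes E :: "'v::finite set set" and B :: "'v set"
  assumes "is_graph E" and "card B \<ge> 2"
  shows "steklov E B 2 \<le>
    ereal (real (card B) / (real (card B) - 1) * real (Min (degree E ` B)))"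
proof -
  have "B \<noteq> {}"
    using assms(2) by auto
  then have "Min (degree E ` B) \<in> degree E ` B"
    by (intro Min_in) auto
  then obtain x\<^sub>0 where "x\<^sub>0 \<in> B" and deg: "degree E x\<^sub>0 = Min (degree E ` B)"
    by auto
  have "card (B - {x\<^sub>0}) \<ge> 1"
    using assms(2) \<open>x\<^sub>0 \<in> B\<close> by (simp add: card_Diff_singleton)
  then have "B - {x\<^sub>0} \<noteq> {}"
    by (metis card.empty not_one_le_zero)
  then obtain y where "y \<noteq> x\<^sub>0"
    by auto
  let ?W = "span {1, axis x\<^sub>0 1 :: real^'v}"
  have "steklov E B 2 \<le> (SUP f \<in> ?W - {0}. rayleigh E B f)"
    using dim_span_one_axis[OF \<open>y \<noteq> x\<^sub>0\<close>] by (intro steklov_le_SUP_rayleigh) simp_all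
  also have "\<dots> \<le> ereal (real (card B) / (real (card B) - 1) * real (degree E x\<^sub>0))"
  proof (rule SUP_least)
    fix f assume "f \<in> ?W - {0}"
    then obtain a b where "f = a *\<^sub>R 1 + b *\<^sub>R axis x\<^sub>0 1" and "f \<noteq> 0"
      by (auto simp: span_insert span_singleton) (metis add.commute diff_add_cancel)
    then show "rayleigh E B f \<le> ereal (real (card B) / (real (card B) - 1) * real (degree E x\<^sub>0))"
      by (rule rayleigh_const_plus_axis_le[OF assms(1) \<open>x\<^sub>0 \<in> B\<close> assms(2)])
  qed
  finally show ?thesis
    unfolding deg .
qed

end
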